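(* Let $N=[n]$, let $v:2^N\to\mathbb{R}_+$ be a monotone submodular valuation with $v(\emptyset)=0$, and let $X$ be a decision map for $v$. Then in every pure Nash equilibrium $p$ of the pricing game defined by $v$ and $X$, the utility of each seller $i$ is $u_i(p)=v(\{i\}\mid N\setminus\{i\})$. In particular, for every pure Nash equilibrium $p$ and every $i$ with $v(\{i\}\mid N\setminus\{i\})>0$, we have $p_i=v(\{i\}\mid N\setminus\{i\})$ and $i\in X(p)$.
   Context: Pricing game: $N=[n]$ services, service $i$ controlled by seller $i$. Buyer valuation $v:2^N\to\mathbb{R}_+$, monotone, $v(\emptyset)=0$; submodular means $v(S\cup T)+v(S\cap T)\le v(S)+v(T)$ for all $S,T$. Marginal value: $v(T\mid S)=v(S\cup T)-v(S)$. For $p\in\mathbb{R}^n_+$, $p(S)=\sum_{j\in S}p_j$, $D(v;p)=\arg\max_{S\subseteq N}(v(S)-p(S))$. A decision map is $X:\mathbb{R}^n_+\to2^N$ with $X(p)\in D(v;p)$ for all $p$. Seller $i$'s utility is $u_i(p)=p_i\mathbf{1}\{i\in X(p)\}$; a pure Nash equilibrium is a $p$ with $u_i(p)\ge u_i(p_i',p_{-i})$ for all $i$ and $p_i'\in\mathbb{R}_+$. *)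

theory Defs
  imports "HOL-Analysis.Analysis"
begin

definition ground :: "nat \<Rightarrow> nat set" where
  "ground n = {1..n}"

definition monotone_val :: "nat \<Rightarrow> (nat set \<Rightarrow> real) \<Rightarrow> bool" where
  "monotone_val n v \<longleftrightarrow> (\<forall>S T. S \<subseteq> T \<and> T \<subseteq> ground n \<longrightarrow> v S \<le> v T)"

definition submodular_val :: "nat \<Rightarrow> (nat set \<Rightarrow> real) \<Rightarrow> bool" where
  "submodular_val n v \<longleftrightarrow> (\<forall>S T. S \<subseteq> ground n \<and> T \<subseteq> ground n \<longrightarrow>
      v (S \<union> T) + v (S \<inter> T) \<le> v S + v T)"

definition valuation :: "nat \<Rightarrow> (nat set \<Rightarrow> real) \<Rightarrow> bool" where
  "valuation n v \<longleftrightarrow> v {} = 0 \<and> (\<forall>S \<subseteq> ground n. v S \<ge> 0)"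

definition marginal :: "(nat set \<Rightarrow> real) \<Rightarrow> nat set \<Rightarrow> nat set \<Rightarrow> real" where
  "marginal v T S = v (S \<union> T) - v S"

definition price_sum :: "(nat \<Rightarrow> real) \<Rightarrow> nat set \<Rightarrow> real" where
  "price_sum p S = (\<Sum>j\<in>S. p j)"

definition nonneg_prices :: "nat \<Rightarrow> (nat \<Rightarrow> real) \<Rightarrow> bool" where
  "nonneg_prices n p \<longleftrightarrow> (\<forall>j\<in>ground n. p j \<ge> 0)"

definition demand :: "nat \<Rightarrow> (nat set \<Rightarrow> real) \<Rightarrow> (nat \<Rightarrow> real) \<Rightarrow> nat set set" where
  "demand n v p = {S. S \<subseteq> ground n \<and>
      (\<forall>T. T \<subseteq> ground n \<longrightarrow> v T - price_sum p T \<le> v S - price_sum p S)}"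

definition decision_map :: "nat \<Rightarrow> (nat set \<Rightarrow> real) \<Rightarrow> ((nat \<Rightarrow> real) \<Rightarrow> nat set) \<Rightarrow> bool" where
  "decision_map n v X \<longleftrightarrow> (\<forall>p. nonneg_prices n p \<longrightarrow> X p \<in> demand n v p)"

definition seller_utility :: "((nat \<Rightarrow> real) \<Rightarrow> nat set) \<Rightarrow> (nat \<Rightarrow> real) \<Rightarrow> nat \<Rightarrow> real" where
  "seller_utility X p i = (if i \<in> X p then p i else 0)"

definition pure_NE :: "nat \<Rightarrow> ((nat \<Rightarrow> real) \<Rightarrow> nat set) \<Rightarrow> (nat \<Rightarrow> real) \<Rightarrow> bool" where
  "pure_NE n X p \<longleftrightarrow> nonneg_prices n p \<and>
     (\<forall>i\<in>ground n. \<forall>q::real. q \<ge> 0 \<longrightarrow>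
        seller_utility X p i \<ge> seller_utility X (p(i := q)) i)"

end

theory Submission
  imports Defs
begin

text \<open>
  Write \<open>m\<^sub>i = v({i} | N - {i})\<close>. A seller earning less than \<open>m\<^sub>i\<close> could charge a price
  strictly in between: by submodularity adding \<open>i\<close> to any bundle is worth at least \<open>m\<^sub>i\<close>,
  so the buyer would keep buying \<open>i\<close>. Conversely, let \<open>i\<close> be sold. An unsold seller could
  otherwise sell at a small positive price, so adding an unsold item to any bundle gains no
  surplus; in particular unsold items in optimal bundles are free. If every optimal bundle
  contained \<open>i\<close>, seller \<open>i\<close> could raise her price, so some optimal \<open>T\<^sub>0\<close> avoids \<open>i\<close>.
  Then \<open>B = X(p) \<union> T\<^sub>0\<close> is optimal, and by submodularity of the surplus so is \<open>B - {i}\<close>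
  (its union with \<open>T\<^sub>0 \<union> {i}\<close> is \<open>B\<close>, the intersection \<open>T\<^sub>0\<close>). Hence
  \<open>p\<^sub>i = v({i} | B - {i}) \<le> m\<^sub>i\<close>, as the items outside \<open>B\<close> add nothing to \<open>B - {i}\<close>.
\<close>

abbreviation surplus :: "(nat set \<Rightarrow> real) \<Rightarrow> (nat \<Rightarrow> real) \<Rightarrow> nat set \<Rightarrow> real" where
  "surplus v p T \<equiv> v T - price_sum p T"

lemma finite_ground [simp]: "finite (ground n)"
  unfolding ground_def by simp

lemma finite_subset_ground: "T \<subseteq> ground n \<Longrightarrow> finite T"
  using finite_subset by fastforce

lemma marginal_ground_remove:
  "i \<in> ground n \<Longrightarrow> marginal v {i} (ground n - {i}) = v (ground n) - v (ground n - {i})"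
  unfolding marginal_def by (simp add: insert_absorb)

lemma price_sum_insert: "finite T \<Longrightarrow> j \<notin> T \<Longrightarrow> price_sum p (insert j T) = price_sum p T + p j"
  unfolding price_sum_def by simp

lemma price_sum_remove: "finite T \<Longrightarrow> j \<in> T \<Longrightarrow> price_sum p T = price_sum p (T - {j}) + p j"
  unfolding price_sum_def by (simp add: sum.remove)

lemma price_sum_update:
  assumes "finite T"
  shows "price_sum (p(j := q)) T = price_sum p T + (if j \<in> T then q - p j else 0)"
proof (cases "j \<in> T")
  case True
  have "price_sum (p(j := q)) (T - {j}) = price_sum p (T - {j})"
    unfolding price_sum_def by (rule sum.cong) auto
  then show ?thesis
    using True price_sum_remove[OF assms True, of "p(j := q)"] price_sum_remove[OF assms True, of p]
    by simp
next
  case False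
  have "price_sum (p(j := q)) T = price_sum p T"
    unfolding price_sum_def using False by (intro sum.cong) auto
  then show ?thesis
    using False by simp
qed

lemma submodular_valD:
  "submodular_val n f \<Longrightarrow> S \<subseteq> ground n \<Longrightarrow> T \<subseteq> ground n \<Longrightarrow>
    f (S \<union> T) + f (S \<inter> T) \<le> f S + f T"
  unfolding submodular_val_def by blast

lemma submodular_marginal_antimono:
  assumes "submodular_val n f" and "T \<subseteq> T'" "T' \<subseteq> ground n" "i \<in> ground n" "i \<notin> T'"
  shows "f (insert i T') - f T' \<le> f (insert i T) - f T"
proof -
  have "insert i T \<subseteq> ground n"
    using assms(2-4) by blast
  moreover have "insert i T \<union> T' = insert i T'" "insert i T \<inter> T' = T"
    using assms(2,5) by auto
  ultimately show ?thesis
    using submodular_valD[OF assms(1), of "insert i T" T'] assms(3) by simp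
qed

lemma submodular_union_le:
  assumes "submodular_val n f" "A \<subseteq> ground n" "C \<subseteq> ground n"
    and "\<forall>j\<in>C. f (insert j A) \<le> f A"
  shows "f (A \<union> C) \<le> f A"
  using finite_subset_ground[OF assms(3)] assms(3,4)
proof (induction C rule: finite_induct)
  case empty
  then show ?case by simp
next
  case (insert j C)
  have "A \<union> C \<subseteq> ground n" "insert j A \<subseteq> ground n"
    using assms(2) insert.prems(1) by auto
  moreover have "(A \<union> C) \<union> insert j A = A \<union> insert j C" "(A \<union> C) \<inter> insert j A = A"
    using insert.hyps(2) by auto
  ultimately show ?case
    using submodular_valD[OF assms(1), of "A \<union> C" "insert j A"] insert.IH insert.prems by simp
qed

lemma submodular_max_of_union_inter:
  assumes "submodular_val n f" "A \<subseteq> ground n" "B \<subseteq> ground n"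
    and "\<forall>T\<subseteq>ground n. f T \<le> w" "f (A \<union> B) = w" "f (A \<inter> B) = w"
  shows "f A = w"
proof -
  have "f A \<le> w" "f B \<le> w"
    using assms(2-4) by auto
  then show ?thesis
    using submodular_valD[OF assms(1-3)] assms(5,6) by linarith
qed

lemma submodular_surplus:
  assumes "submodular_val n v"
  shows "submodular_val n (surplus v p)"
  unfolding submodular_val_def
proof (intro allI impI)
  fix S T assume ST: "S \<subseteq> ground n \<and> T \<subseteq> ground n"
  then have "v (S \<union> T) + v (S \<inter> T) \<le> v S + v T"
    using submodular_valD[OF assms] by blast
  moreover have "price_sum p (S \<union> T) + price_sum p (S \<inter> T) = price_sum p S + price_sum p T"
    using ST finite_subset_ground unfolding price_sum_def by (metis sum.union_inter)
  ultimately show "surplus v p (S \<union> T) + surplus v p (S \<inter> T) \<le> surplus v p S + surplus v p T"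
    by linarith
qed

locale pricing_equilibrium =
  fixes n :: nat and v :: "nat set \<Rightarrow> real" and X :: "(nat \<Rightarrow> real) \<Rightarrow> nat set"
    and p :: "nat \<Rightarrow> real"
  assumes decision_map: "decision_map n v X" and equilibrium: "pure_NE n X p"
begin

lemma prices_nonneg: "nonneg_prices n p"
  using equilibrium unfolding pure_NE_def by blast

lemma price_nonneg: "j \<in> ground n \<Longrightarrow> 0 \<le> p j"
  using prices_nonneg unfolding nonneg_prices_def by blast

lemma demanded_bundle:
  assumes "nonneg_prices n p'"
  shows "X p' \<subseteq> ground n" and "T \<subseteq> ground n \<Longrightarrow> surplus v p' T \<le> surplus v p' (X p')"
  using assms decision_map unfolding decision_map_def demand_def by blast+

lemma chosen_subset: "X p \<subseteq> ground n"
  using demanded_bundle(1)[OF prices_nonneg] .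

lemma chosen_optimal: "T \<subseteq> ground n \<Longrightarrow> surplus v p T \<le> surplus v p (X p)"
  using demanded_bundle(2)[OF prices_nonneg] .

lemma utility_nonneg: "i \<in> ground n \<Longrightarrow> 0 \<le> seller_utility X p i"
  unfolding seller_utility_def by (simp add: price_nonneg)

text \<open>
  A seller who raises her price above her current utility must lose her sale; the
  buyer then gets a bundle avoiding her, whose surplus does not depend on her price.
\<close>

lemma overpricing_deviation:
  assumes "i \<in> ground n" "0 \<le> q" "seller_utility X p i < q"
  shows "\<exists>T\<subseteq>ground n. i \<notin> T \<and> (\<forall>R\<subseteq>ground n. surplus v (p(i := q)) R \<le> surplus v p T)"
proof (intro exI conjI)
  have prices': "nonneg_prices n (p(i := q))"
    using prices_nonneg assms(2) unfolding nonneg_prices_def by simp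
  show T: "X (p(i := q)) \<subseteq> ground n"
    using demanded_bundle(1)[OF prices'] .
  show i: "i \<notin> X (p(i := q))"
    using equilibrium assms unfolding pure_NE_def seller_utility_def by force
  have "surplus v (p(i := q)) (X (p(i := q))) = surplus v p (X (p(i := q)))"
    using price_sum_update[OF finite_subset_ground[OF T]] i by simp
  then show "\<forall>R\<subseteq>ground n. surplus v (p(i := q)) R \<le> surplus v p (X (p(i := q)))"
    using demanded_bundle(2)[OF prices'] by simp
qed

lemma unsold_item_adds_no_surplus:
  assumes "j \<in> ground n" "j \<notin> X p" "R \<subseteq> ground n" "j \<notin> R"
  shows "v (insert j R) - price_sum p R \<le> surplus v p (X p)"
proof (rule ccontr)
  assume "\<not> ?thesis"
  moreover define q where "q = (v (insert j R) - price_sum p R - surplus v p (X p)) / 2"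
  ultimately have q: "0 < q" "surplus v p (X p) < v (insert j R) - price_sum p R - q"
    by auto
  have "seller_utility X p j < q"
    using assms(2) q(1) unfolding seller_utility_def by simp
  then obtain T where T: "T \<subseteq> ground n"
    and opt: "\<forall>R\<subseteq>ground n. surplus v (p(j := q)) R \<le> surplus v p T"
    using overpricing_deviation[OF assms(1) less_imp_le[OF q(1)]] by auto
  have "surplus v (p(j := q)) (insert j R) = v (insert j R) - price_sum p R - q"
    using price_sum_update[of "insert j R" p j q] price_sum_insert[of R j p]
      finite_subset_ground[OF assms(3)] assms(4) by simp
  moreover have "surplus v (p(j := q)) (insert j R) \<le> surplus v p T"
    using opt assms(1,3) by blast
  moreover have "surplus v p T \<le> surplus v p (X p)"
    using chosen_optimal[OF T] .
  ultimately show False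
    using q(2) by linarith
qed

lemma unsold_in_optimal_price_zero:
  assumes "T \<subseteq> ground n" "surplus v p T = surplus v p (X p)" "j \<in> T" "j \<notin> X p"
  shows "p j = 0"
proof -
  have "v (insert j (T - {j})) - price_sum p (T - {j}) \<le> surplus v p (X p)"
    using unsold_item_adds_no_surplus[of j "T - {j}"] assms by blast
  moreover have "insert j (T - {j}) = T"
    using assms(3) by blast
  ultimately have "p j \<le> 0"
    using assms(2) price_sum_remove[OF finite_subset_ground[OF assms(1)] assms(3), of p] by simp
  then show ?thesis
    using price_nonneg assms(1,3) by force
qed

lemma value_union_unsold_le:
  assumes "submodular_val n v" "A \<subseteq> ground n" "surplus v p A = surplus v p (X p)"
    and "C \<subseteq> ground n - X p"
  shows "v (A \<union> C) \<le> v A"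
proof (rule submodular_union_le[OF assms(1,2)])
  show "C \<subseteq> ground n"
    using assms(4) by blast
  show "\<forall>j\<in>C. v (insert j A) \<le> v A"
  proof
    fix j assume "j \<in> C"
    then show "v (insert j A) \<le> v A"
      using unsold_item_adds_no_surplus[of j A] assms(2-4) by (cases "j \<in> A") (auto simp: insert_absorb)
  qed
qed

lemma union_chosen_optimal:
  assumes "submodular_val n v" "monotone_val n v"
    and "T \<subseteq> ground n" "surplus v p T = surplus v p (X p)"
  shows "surplus v p (X p \<union> T) = surplus v p (X p)"
proof -
  have union: "X p \<union> T = X p \<union> (T - X p)"
    by blast
  have "price_sum p (X p \<union> (T - X p)) = price_sum p (X p) + price_sum p (T - X p)"
    unfolding price_sum_def
    using finite_subset_ground[OF chosen_subset] finite_subset_ground[OF assms(3)]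
    by (intro sum.union_disjoint) auto
  moreover have "price_sum p (T - X p) = 0"
    unfolding price_sum_def using unsold_in_optimal_price_zero[OF assms(3,4)] by simp
  moreover have "v (X p \<union> (T - X p)) \<le> v (X p)"
    using value_union_unsold_le[OF assms(1) chosen_subset refl] assms(3) by blast
  moreover have "v (X p) \<le> v (X p \<union> T)"
    using assms(2,3) chosen_subset unfolding monotone_val_def by blast
  ultimately show ?thesis
    unfolding union by simp
qed

lemma sold_item_has_optimal_alternative:
  assumes "i \<in> X p"
  shows "\<exists>T\<subseteq>ground n. i \<notin> T \<and> surplus v p T = surplus v p (X p)"
proof -
  define F where "F = {T. T \<subseteq> ground n \<and> i \<notin> T}"
  define w where "w = Max (surplus v p ` F)"
  have "finite F" "{} \<in> F"
    unfolding F_def by auto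
  then have "w \<in> surplus v p ` F" and w_max: "\<forall>T\<in>F. surplus v p T \<le> w"
    unfolding w_def by (auto intro: Max_in)
  then obtain T0 where T0: "T0 \<subseteq> ground n" "i \<notin> T0" "surplus v p T0 = w"
    unfolding F_def by blast
  have iN: "i \<in> ground n"
    using chosen_subset assms by blast
  have not_lt: "\<not> w < surplus v p (X p)"
  proof
    assume lt: "w < surplus v p (X p)"
    define q where "q = p i + (surplus v p (X p) - w) / 2"
    have q: "0 \<le> q" "seller_utility X p i < q"
      using lt assms price_nonneg[OF iN] unfolding q_def seller_utility_def by auto
    obtain T where "T \<in> F" and "surplus v (p(i := q)) (X p) \<le> surplus v p T"
      using overpricing_deviation[OF iN q] chosen_subset unfolding F_def by auto
    then have "surplus v (p(i := q)) (X p) \<le> w"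
      using w_max by fastforce
    moreover have "surplus v (p(i := q)) (X p) = surplus v p (X p) - (q - p i)"
      using price_sum_update[OF finite_subset_ground[OF chosen_subset]] assms by simp
    ultimately have "surplus v p (X p) - (q - p i) \<le> w"
      by simp
    then show False
      using lt unfolding q_def by (simp add: field_simps)
  qed
  have "surplus v p T0 = surplus v p (X p)"
    using chosen_optimal[OF T0(1)] T0(3) not_lt by linarith
  then show ?thesis
    using T0(1,2) by blast
qed

lemma marginal_le_utility:
  assumes "submodular_val n v" "i \<in> ground n"
  shows "marginal v {i} (ground n - {i}) \<le> seller_utility X p i"
proof (rule ccontr)
  define m where "m = marginal v {i} (ground n - {i})"
  define q where "q = (seller_utility X p i + m) / 2"
  assume "\<not> m \<le> seller_utility X p i"
  then have q: "0 \<le> q" "seller_utility X p i < q" "q < m"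
    using utility_nonneg[OF assms(2)] unfolding q_def by auto
  obtain T where T: "T \<subseteq> ground n" "i \<notin> T"
    and "surplus v (p(i := q)) (insert i T) \<le> surplus v p T"
    using overpricing_deviation[OF assms(2) q(1,2)] assms(2) by auto
  then have "v (insert i T) - v T \<le> q"
    using price_sum_update[of "insert i T" p i q] price_sum_insert[of T i p]
      finite_subset_ground[OF T(1)] by simp
  moreover have "m \<le> v (insert i T) - v T"
    using submodular_marginal_antimono[OF assms(1), of T "ground n - {i}" i] T assms(2)
    unfolding m_def marginal_ground_remove[OF assms(2)] by (simp add: insert_absorb subset_Diff_insert)
  ultimately show False
    using q(3) by simp
qed

lemma price_le_marginal:
  assumes sub: "submodular_val n v" and mono: "monotone_val n v" and i: "i \<in> X p"
  shows "p i \<le> marginal v {i} (ground n - {i})"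
proof -
  let ?N = "ground n" and ?w = "surplus v p (X p)"
  obtain T0 where T0: "T0 \<subseteq> ?N" "i \<notin> T0" "surplus v p T0 = ?w"
    using sold_item_has_optimal_alternative[OF i] by blast
  define B where "B = X p \<union> T0"
  have B: "B \<subseteq> ?N" "i \<in> B" "surplus v p B = ?w"
    using chosen_subset T0 i union_chosen_optimal[OF sub mono T0(1,3)] unfolding B_def by auto
  have B_minus: "surplus v p (B - {i}) = ?w"
  proof (rule submodular_max_of_union_inter[OF submodular_surplus[OF sub]])
    have "(B - {i}) \<union> insert i T0 = B" "(B - {i}) \<inter> insert i T0 = T0"
      using B T0(2) unfolding B_def by auto
    then show "surplus v p ((B - {i}) \<union> insert i T0) = ?w" "surplus v p ((B - {i}) \<inter> insert i T0) = ?w"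
      using B(3) T0(3) by simp_all
  qed (use B T0 chosen_optimal in auto)
  then have price: "p i = v B - v (B - {i})"
    using B price_sum_remove[OF finite_subset_ground[OF B(1)] B(2), of p] by simp
  have "v ((B - {i}) \<union> (?N - B)) \<le> v (B - {i})"
    using value_union_unsold_le[OF sub _ B_minus, of "?N - B"] B(1) unfolding B_def by blast
  moreover have "(B - {i}) \<union> (?N - B) = ?N - {i}"
    using B by auto
  moreover have "v B \<le> v ?N"
    using mono B unfolding monotone_val_def by blast
  ultimately show ?thesis
    using price marginal_ground_remove[OF set_mp[OF B(1) B(2)]] by simp
qed

lemma utility_eq_marginal:
  assumes "submodular_val n v" "monotone_val n v" "i \<in> ground n"
  shows "seller_utility X p i = marginal v {i} (ground n - {i})"
proof (cases "i \<in> X p")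
  case True
  then show ?thesis
    using price_le_marginal[OF assms(1,2) True] marginal_le_utility[OF assms(1,3)]
    unfolding seller_utility_def by simp
next
  case False
  have "0 \<le> marginal v {i} (ground n - {i})"
    using assms(2,3) unfolding marginal_ground_remove[OF assms(3)] monotone_val_def by auto
  then show ?thesis
    using False marginal_le_utility[OF assms(1,3)] unfolding seller_utility_def by simp
qed

end

theorem mainTheorem6:
  fixes n :: nat and v :: "nat set \<Rightarrow> real" and X :: "(nat \<Rightarrow> real) \<Rightarrow> nat set"
    and p :: "nat \<Rightarrow> real"
  assumes "valuation n v" and "monotone_val n v" and "submodular_val n v"
    and "decision_map n v X"
    and "pure_NE n X p"
  shows "(\<forall>i\<in>ground n. seller_utility X p i = marginal v {i} (ground n - {i}))
       \<and> (\<forall>i\<in>ground n. marginal v {i} (ground n - {i}) > 0 \<longrightarrow>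
            p i = marginal v {i} (ground n - {i}) \<and> i \<in> X p)"
proof -
  interpret pricing_equilibrium n v X p
    using assms(4,5) by unfold_locales
  have utility: "seller_utility X p i = marginal v {i} (ground n - {i})" if "i \<in> ground n" for i
    using utility_eq_marginal[OF assms(3,2) that] .
  moreover have "p i = marginal v {i} (ground n - {i}) \<and> i \<in> X p"
    if "i \<in> ground n" "marginal v {i} (ground n - {i}) > 0" for i
    using utility[OF that(1)] that(2) unfolding seller_utility_def by (auto split: if_splits)
  ultimately show ?thesis
    by blast
qed

end
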